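(* There is an absolute constant $C$ such that the following holds. If $G=(U,V,E)$ is a path-restricted ordered bipartite graph in which every forward path has length (number of edges) at most $k$, then $|E|\le C\,k\,(|U|+|V|)$, i.e. $G$ has $O(k(|U|+|V|))$ edges.
   Context: An ordered bipartite graph is $G=(U,V,E)$ where $U,V$ are disjoint finite sets, each carrying a strict total order (both written $<$), and $E\subseteq U\times V$. A path is a sequence of edges in which consecutive edges share a vertex. A path visiting the vertices of $U$ in the order $u_1,\dots,u_k$ and those of $V$ in the order $v_1,\dots,v_l$ is a forward path if either $u_1<\dots<u_k$ and $v_1<\dots<v_l$, or $u_1>\dots>u_k$ and $v_1>\dots>v_l$. For $x\le y$ in $U$ write $\langle x,y\rangle=\{u\in U: x\le u\le y\}$, and similarly in $V$. If $u_a<u_b$ are the smallest and largest $U$-vertices and $v_c<v_d$ the smallest and largest $V$-vertices of a forward path $P$, the range of $P$ is $\{\langle u_a,u_b\rangle,\langle v_c,v_d\rangle\}$. A vertex of $P$ is non-terminal if it is adjacent along $P$ to two vertices of $P$. An edge is a back edge to $P$ if either it is $(u_a,v_j)$ with $v_j\in\langle v_c,v_d\rangle$ and $v_j>v'$ for some non-terminal vertex $v'\in V$ of $P$, or it is $(u_i,v_c)$ with $u_i\in\langle u_a,u_b\rangle$ and $u_i>u'$ for some non-terminal vertex $u'\in U$ of $P$. $G$ is a path-restricted ordered bipartite graph (PRBG) if no forward path in $G$ has a back edge in $E$. *)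

theory Defs
  imports Complex_Main
begin

text \<open>Ordered bipartite graph: the two sides U and V are finite sets of naturals
(every finite strict total order is order-isomorphic to an initial segment of nat),
ordered by the order of nat. Vertices are tagged by side: Inl u for u in U, Inr v for v in V,
so the sides are disjoint as vertex sets.\<close>

fun adj :: "(nat \<times> nat) set \<Rightarrow> nat + nat \<Rightarrow> nat + nat \<Rightarrow> bool" where
  "adj E (Inl u) (Inr v) = ((u, v) \<in> E)"
| "adj E (Inr v) (Inl u) = ((u, v) \<in> E)"
| "adj E _ _ = False"

definition is_path :: "(nat \<times> nat) set \<Rightarrow> (nat + nat) list \<Rightarrow> bool" where
  "is_path E P \<longleftrightarrow> 2 \<le> length P \<and> distinct P \<and>
     (\<forall>i. i + 1 < length P \<longrightarrow> adj E (P ! i) (P ! (i + 1)))"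

definition path_len :: "(nat + nat) list \<Rightarrow> nat" where
  "path_len P = length P - 1"

definition uverts :: "(nat + nat) list \<Rightarrow> nat list" where
  "uverts P = concat (map (case_sum (\<lambda>u. [u]) (\<lambda>_. [])) P)"

definition vverts :: "(nat + nat) list \<Rightarrow> nat list" where
  "vverts P = concat (map (case_sum (\<lambda>_. []) (\<lambda>v. [v])) P)"

definition forward_path :: "(nat \<times> nat) set \<Rightarrow> (nat + nat) list \<Rightarrow> bool" where
  "forward_path E P \<longleftrightarrow> is_path E P \<and>
     ((sorted_wrt (<) (uverts P) \<and> sorted_wrt (<) (vverts P)) \<or>
      (sorted_wrt (>) (uverts P) \<and> sorted_wrt (>) (vverts P)))"

definition nonterm_U :: "(nat + nat) list \<Rightarrow> nat set" where
  "nonterm_U P = {u. \<exists>i. 0 < i \<and> i + 1 < length P \<and> P ! i = Inl u}"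

definition nonterm_V :: "(nat + nat) list \<Rightarrow> nat set" where
  "nonterm_V P = {v. \<exists>i. 0 < i \<and> i + 1 < length P \<and> P ! i = Inr v}"

definition back_edge :: "(nat + nat) list \<Rightarrow> nat \<times> nat \<Rightarrow> bool" where
  "back_edge P e \<longleftrightarrow>
     (let ua = Min (set (uverts P)); ub = Max (set (uverts P));
          vc = Min (set (vverts P)); vd = Max (set (vverts P)) in
      (fst e = ua \<and> vc \<le> snd e \<and> snd e \<le> vd \<and> (\<exists>v'\<in>nonterm_V P. v' < snd e)) \<or>
      (snd e = vc \<and> ua \<le> fst e \<and> fst e \<le> ub \<and> (\<exists>u'\<in>nonterm_U P. u' < fst e)))"

definition PRBG :: "nat set \<Rightarrow> nat set \<Rightarrow> (nat \<times> nat) set \<Rightarrow> bool" where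
  "PRBG U V E \<longleftrightarrow> finite U \<and> finite V \<and> E \<subseteq> U \<times> V \<and>
     \<not> (\<exists>P e. forward_path E P \<and> e \<in> E \<and> back_edge P e)"

end

theory Submission
  imports Defs
begin

text \<open>Call an edge last in its row (column) if no edge of the same U-vertex (V-vertex) ends
further right. There are at most |U| + |V| such edges. Every other edge (u, v) has a
successor at both of its endpoints, so any increasing path of the remaining graph, which ends
with such an edge, can be prolonged by one edge in the whole graph. Hence deleting these edges
shortens the longest increasing path, and induction on k gives |E| \<le> k (|U| + |V|).\<close>

lemma adj_cases:
  assumes "adj E x y"
  obtains u v where "x = Inl u" "y = Inr v" "(u, v) \<in> E"
    | u v where "x = Inr v" "y = Inl u" "(u, v) \<in> E"
  using assms by (cases "(E, x, y)" rule: adj.cases) auto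

lemma adj_mono: "E \<subseteq> F \<Longrightarrow> adj E x y \<Longrightarrow> adj F x y"
  by (erule adj_cases) auto

lemma uverts_simps [simp]:
  "uverts [] = []" "uverts (Inl u # xs) = u # uverts xs" "uverts (Inr v # xs) = uverts xs"
  "uverts (xs @ ys) = uverts xs @ uverts ys"
  by (simp_all add: uverts_def)

lemma vverts_simps [simp]:
  "vverts [] = []" "vverts (Inl u # xs) = vverts xs" "vverts (Inr v # xs) = v # vverts xs"
  "vverts (xs @ ys) = vverts xs @ vverts ys"
  by (simp_all add: vverts_def)

lemma Inl_in_set_imp_in_uverts: "Inl u \<in> set P \<Longrightarrow> u \<in> set (uverts P)"
  by (induction P) (auto simp: uverts_def vverts_def)

lemma Inr_in_set_imp_in_vverts: "Inr v \<in> set P \<Longrightarrow> v \<in> set (vverts P)"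
  by (induction P) (auto simp: uverts_def vverts_def)

lemma is_path_last_edge:
  assumes "is_path E P"
  obtains Q x y where "P = Q @ [x, y]" "adj E x y"
proof -
  have "2 \<le> length P" using assms by (simp add: is_path_def)
  then obtain Q x y where P: "P = Q @ [x, y]"
  proof (induction P rule: rev_induct)
    case (snoc y R)
    then show ?case by (cases R rule: rev_cases) auto
  qed simp
  have "adj E x y"
    using assms unfolding is_path_def P by (auto simp: nth_append dest!: spec[of _ "length Q"])
  with P show thesis by (rule that)
qed

lemma is_path_snoc:
  assumes "is_path E P" "adj E (last P) w" "w \<notin> set P"
  shows "is_path E (P @ [w])"
  unfolding is_path_def
proof (intro conjI allI impI)
  show "2 \<le> length (P @ [w])" "distinct (P @ [w])"
    using assms(1,3) by (simp_all add: is_path_def)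
  have "P \<noteq> []" using assms(1) by (auto simp: is_path_def)
  fix i assume "i + 1 < length (P @ [w])"
  then consider "i + 1 < length P" | "i = length P - 1" by fastforce
  then show "adj E ((P @ [w]) ! i) ((P @ [w]) ! (i + 1))"
  proof cases
    case 1
    with assms(1) show ?thesis by (simp add: is_path_def nth_append)
  next
    case 2
    with assms(2) \<open>P \<noteq> []\<close> show ?thesis by (simp add: nth_append last_conv_nth)
  qed
qed

lemma is_path_mono: "E \<subseteq> F \<Longrightarrow> is_path E P \<Longrightarrow> is_path F P"
  by (auto simp: is_path_def intro: adj_mono)

definition increasing_path :: "(nat \<times> nat) set \<Rightarrow> (nat + nat) list \<Rightarrow> bool" where
  "increasing_path E P \<longleftrightarrow> is_path E P \<and> sorted_wrt (<) (uverts P) \<and> sorted_wrt (<) (vverts P)"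

lemma forward_path_if_increasing_path: "increasing_path E P \<Longrightarrow> forward_path E P"
  by (simp add: increasing_path_def forward_path_def)

lemma increasing_path_extend:
  assumes P: "increasing_path E' P" and "E' \<subseteq> E"
    and successors: "\<And>u v. (u, v) \<in> E' \<Longrightarrow> (\<exists>u' > u. (u', v) \<in> E) \<and> (\<exists>v' > v. (u, v') \<in> E)"
  shows "\<exists>w. increasing_path E (P @ [w])"
proof -
  have path: "is_path E P" and su: "sorted_wrt (<) (uverts P)" and sv: "sorted_wrt (<) (vverts P)"
    using P is_path_mono[OF \<open>E' \<subseteq> E\<close>] by (auto simp: increasing_path_def)
  obtain Q x y where PQ: "P = Q @ [x, y]" and "adj E' x y"
    using P by (auto simp: increasing_path_def elim: is_path_last_edge)
  from \<open>adj E' x y\<close> show ?thesis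
  proof (cases rule: adj_cases)
    case (1 u v)
    then obtain u' where "u' > u" "(u', v) \<in> E" using successors by blast
    have above: "\<forall>z \<in> set (uverts P). z < u'"
      using su \<open>u' > u\<close> by (auto simp: PQ 1 sorted_wrt_append)
    then have "Inl u' \<notin> set P" using Inl_in_set_imp_in_uverts by blast
    with path \<open>(u', v) \<in> E\<close> have "is_path E (P @ [Inl u'])"
      by (intro is_path_snoc) (auto simp: PQ 1)
    with su sv above show ?thesis
      unfolding increasing_path_def by (auto simp: sorted_wrt_append)
  next
    case (2 u v)
    then obtain v' where "v' > v" "(u, v') \<in> E" using successors by blast
    have above: "\<forall>z \<in> set (vverts P). z < v'"
      using sv \<open>v' > v\<close> by (auto simp: PQ 2 sorted_wrt_append)
    then have "Inr v' \<notin> set P" using Inr_in_set_imp_in_vverts by blast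
    with path \<open>(u, v') \<in> E\<close> have "is_path E (P @ [Inr v'])"
      by (intro is_path_snoc) (auto simp: PQ 2)
    with su sv above show ?thesis
      unfolding increasing_path_def by (auto simp: sorted_wrt_append)
  qed
qed

definition last_in_row :: "(nat \<times> nat) set \<Rightarrow> (nat \<times> nat) set" where
  "last_in_row E = {(u, v) \<in> E. \<not> (\<exists>v' > v. (u, v') \<in> E)}"

definition last_in_col :: "(nat \<times> nat) set \<Rightarrow> (nat \<times> nat) set" where
  "last_in_col E = {(u, v) \<in> E. \<not> (\<exists>u' > u. (u', v) \<in> E)}"

lemma last_in_row_subset: "last_in_row E \<subseteq> E"
  by (auto simp: last_in_row_def)

lemma last_in_col_subset: "last_in_col E \<subseteq> E"
  by (auto simp: last_in_col_def)

lemma card_last_in_row_le: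
  assumes "finite U" "E \<subseteq> U \<times> V"
  shows "card (last_in_row E) \<le> card U"
proof -
  have "inj_on fst (last_in_row E)"
    by (rule inj_onI) (auto simp: last_in_row_def, metis linorder_neqE_nat)
  moreover have "fst ` last_in_row E \<subseteq> U" using assms(2) by (auto simp: last_in_row_def)
  ultimately show ?thesis using assms(1) card_inj_on_le by blast
qed

lemma card_last_in_col_le:
  assumes "finite V" "E \<subseteq> U \<times> V"
  shows "card (last_in_col E) \<le> card V"
proof -
  have "inj_on snd (last_in_col E)"
    by (rule inj_onI) (auto simp: last_in_col_def, metis linorder_neqE_nat)
  moreover have "snd ` last_in_col E \<subseteq> V" using assms(2) by (auto simp: last_in_col_def)
  ultimately show ?thesis using assms(1) card_inj_on_le by blast
qed

lemma card_edges_le_if_increasing_paths_bounded: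
  assumes "finite U" "finite V" "E \<subseteq> U \<times> V"
    and "\<forall>P. increasing_path E P \<longrightarrow> path_len P \<le> k"
  shows "card E \<le> k * (card U + card V)"
  using assms(3,4)
proof (induction k arbitrary: E)
  case 0
  have "E = {}"
  proof (rule ccontr)
    assume "E \<noteq> {}"
    then obtain u v where "(u, v) \<in> E" by auto
    then have "increasing_path E [Inl u, Inr v]"
      by (auto simp: increasing_path_def is_path_def less_Suc_eq)
    with "0.prems"(2) show False by (fastforce simp: path_len_def)
  qed
  then show ?case by simp
next
  case (Suc k)
  define E' where "E' = E - last_in_row E - last_in_col E"
  have "E' \<subseteq> E" by (auto simp: E'_def)
  have successors: "(\<exists>u' > u. (u', v) \<in> E) \<and> (\<exists>v' > v. (u, v') \<in> E)" if "(u, v) \<in> E'" for u v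
    using that by (auto simp: E'_def last_in_row_def last_in_col_def)
  have "finite E" using Suc.prems(1) assms(1,2) finite_subset by blast
  have "path_len P \<le> k" if P: "increasing_path E' P" for P
  proof -
    obtain w where "increasing_path E (P @ [w])"
      using increasing_path_extend[OF P \<open>E' \<subseteq> E\<close> successors] by blast
    with Suc.prems(2) have "path_len (P @ [w]) \<le> Suc k" by blast
    then show ?thesis by (simp add: path_len_def)
  qed
  with Suc.IH Suc.prems(1) \<open>E' \<subseteq> E\<close> have "card E' \<le> k * (card U + card V)" by blast
  moreover have "card (E - E') \<le> card U + card V"
  proof -
    have "card (E - E') \<le> card (last_in_row E \<union> last_in_col E)"
      using finite_subset[OF last_in_row_subset \<open>finite E\<close>]
        finite_subset[OF last_in_col_subset \<open>finite E\<close>]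
      by (intro card_mono) (auto simp: E'_def)
    also have "\<dots> \<le> card (last_in_row E) + card (last_in_col E)" by (rule card_Un_le)
    also have "\<dots> \<le> card U + card V"
      using card_last_in_row_le[OF assms(1) Suc.prems(1)]
        card_last_in_col_le[OF assms(2) Suc.prems(1)] by simp
    finally show ?thesis .
  qed
  moreover have "card E = card E' + card (E - E')"
    using \<open>finite E\<close> \<open>E' \<subseteq> E\<close> by (metis card_Diff_subset card_mono finite_subset le_add_diff_inverse)
  ultimately show ?case by simp
qed

theorem lemma8:
  shows "\<exists>C::real. \<forall>(U::nat set) (V::nat set) (E::(nat \<times> nat) set) (k::nat).
           PRBG U V E \<and> (\<forall>P. forward_path E P \<longrightarrow> path_len P \<le> k) \<longrightarrow>
           real (card E) \<le> C * real k * (real (card U) + real (card V))"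
proof (intro exI[of _ 1] allI impI)
  fix U V :: "nat set" and E :: "(nat \<times> nat) set" and k :: nat
  assume "PRBG U V E \<and> (\<forall>P. forward_path E P \<longrightarrow> path_len P \<le> k)"
  then have "card E \<le> k * (card U + card V)"
    by (intro card_edges_le_if_increasing_paths_bounded)
      (auto simp: PRBG_def dest: forward_path_if_increasing_path)
  then show "real (card E) \<le> 1 * real k * (real (card U) + real (card V))"
    by (metis mult_1 of_nat_add of_nat_le_iff of_nat_mult)
qed

end
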